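(* Let $R$ be a skew field, $a_1,\dots,a_4\in R^*$, $A_i=a_ia_{i+1}a_{i+2}a_{i+3}$ (indices mod $4$) with $1+A_i\ne0$ for all $i$, and define $$b_1=(1+A_3^{-1})a_3,\quad b_2=(1+A_4)^{-1}a_4,\quad b_3=(1+A_1^{-1})a_1,\quad b_4=(1+A_2)^{-1}a_2,$$ and $B_i=b_ib_{i+1}b_{i+2}b_{i+3}$. Then for all $i\in\mathbb Z/4\mathbb Z$: $$b_ib_{i+1}=(a_ia_{i+1})^{-1},\qquad A_i=B_{i+2}^{-1}.$$ *)

theory Defs
  imports Main
begin

text \<open>Cyclic products of four elements of a (possibly non-commutative) division ring,
indices taken mod 4.  Indices are 0-based: the paper's a_1,...,a_4 are a 1, a 2, a 3, a 0
(equivalently a k for any k, read mod 4).\<close>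

definition cyc4 :: "(nat \<Rightarrow> 'a::division_ring) \<Rightarrow> nat \<Rightarrow> 'a" where
  "cyc4 a i = a (i mod 4) * a ((i + 1) mod 4) * a ((i + 2) mod 4) * a ((i + 3) mod 4)"

end

theory Submission
  imports Defs
begin

text \<open>Let \<open>A = p q r s\<close> be a cyclic product of four consecutive \<open>a\<close>'s; the next one
is \<open>q r s p = p\<^sup>-\<^sup>1 A p\<close>, so \<open>p (1 + q r s p)\<^sup>-\<^sup>1 = (1 + A)\<^sup>-\<^sup>1 p\<close>. Together with
\<open>(1 + A\<^sup>-\<^sup>1)(1 + A)\<^sup>-\<^sup>1 = (1 + A)\<^sup>-\<^sup>1(1 + A\<^sup>-\<^sup>1) = A\<^sup>-\<^sup>1\<close> this collapses each product
\<open>b\<^sub>i b\<^sub>i\<^sub>+\<^sub>1\<close> to \<open>A\<^sup>-\<^sup>1 p q = (r s)\<^sup>-\<^sup>1\<close>. Since \<open>B\<^sub>i\<^sub>+\<^sub>2\<close> is the product of the two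
adjacent pairs \<open>b\<^sub>i\<^sub>+\<^sub>2 b\<^sub>i\<^sub>+\<^sub>3\<close> and \<open>b\<^sub>i b\<^sub>i\<^sub>+\<^sub>1\<close>, it is the inverse of \<open>A\<^sub>i\<close>.\<close>

lemma division_ring_inverse_mult_distrib:
  fixes x y :: "'a::division_ring"
  shows "inverse (x * y) = inverse y * inverse x"
  by (cases "x = 0 \<or> y = 0") (auto simp: nonzero_inverse_mult_distrib)

lemma intertwine_inverse:
  fixes c x y :: "'a::division_ring"
  assumes "c * x = y * c"
  shows "c * inverse x = inverse y * c"
proof (cases "c = 0 \<or> x = 0 \<or> y = 0")
  case True
  with assms show ?thesis by auto
next
  case False
  have "inverse y * c = inverse y * (c * x) * inverse x"
    using False by (simp add: mult.assoc)
  also have "\<dots> = c * inverse x"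
    using False by (simp add: assms mult.assoc[symmetric])
  finally show ?thesis ..
qed

lemma one_plus_inverse_mult_inverse_one_plus:
  fixes u :: "'a::division_ring"
  assumes "u \<noteq> 0" "1 + u \<noteq> 0"
  shows "(1 + inverse u) * inverse (1 + u) = inverse u"
proof -
  have "1 + inverse u = inverse u * (1 + u)" using assms by (simp add: distrib_left)
  then show ?thesis using assms by (simp add: mult.assoc)
qed

lemma inverse_one_plus_mult_one_plus_inverse:
  fixes u :: "'a::division_ring"
  assumes "u \<noteq> 0" "1 + u \<noteq> 0"
  shows "inverse (1 + u) * (1 + inverse u) = inverse u"
proof -
  have "1 + inverse u = (1 + u) * inverse u" using assms by (simp add: distrib_right)
  then show ?thesis using assms by (simp flip: mult.assoc)
qed

lemma inverse_cyclic_product_cancel: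
  fixes p q r s :: "'a::division_ring"
  assumes "p \<noteq> 0" "q \<noteq> 0"
  shows "inverse (p * q * r * s) * p * q = inverse (r * s)"
  using assms by (simp add: division_ring_inverse_mult_distrib mult.assoc)

lemma plus_inverse_pair_product:
  fixes p q r s :: "'a::division_ring"
  assumes "p \<noteq> 0" "q \<noteq> 0" "r \<noteq> 0" "s \<noteq> 0" "1 + p * q * r * s \<noteq> 0"
  shows "(1 + inverse (p * q * r * s)) * p * (inverse (1 + q * r * s * p) * q) = inverse (r * s)"
proof -
  let ?A = "p * q * r * s"
  have A_nz: "?A \<noteq> 0"
    using assms(1-4) by simp
  have "p * (1 + q * r * s * p) = (1 + ?A) * p"
    by (simp add: distrib_left distrib_right mult.assoc)
  then have conjugated: "p * inverse (1 + q * r * s * p) = inverse (1 + ?A) * p"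
    by (rule intertwine_inverse)
  have "(1 + inverse ?A) * p * (inverse (1 + q * r * s * p) * q)
      = (1 + inverse ?A) * (p * inverse (1 + q * r * s * p)) * q"
    by (simp only: mult.assoc)
  also have "\<dots> = (1 + inverse ?A) * inverse (1 + ?A) * p * q"
    unfolding conjugated by (simp only: mult.assoc)
  also have "\<dots> = inverse ?A * p * q"
    using one_plus_inverse_mult_inverse_one_plus[OF A_nz assms(5)] by (simp only:)
  also have "\<dots> = inverse (r * s)"
    using assms(1,2) by (rule inverse_cyclic_product_cancel)
  finally show ?thesis .
qed

lemma inverse_plus_pair_product:
  fixes p q r s :: "'a::division_ring"
  assumes "p \<noteq> 0" "q \<noteq> 0" "r \<noteq> 0" "s \<noteq> 0" "1 + p * q * r * s \<noteq> 0"
  shows "inverse (1 + p * q * r * s) * p * ((1 + inverse (q * r * s * p)) * q) = inverse (r * s)"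
proof -
  let ?A = "p * q * r * s"
  have A_nz: "?A \<noteq> 0"
    using assms(1-4) by simp
  have "p * (q * r * s * p) = ?A * p"
    by (simp add: mult.assoc)
  then have "p * inverse (q * r * s * p) = inverse ?A * p"
    by (rule intertwine_inverse)
  then have conjugated: "p * (1 + inverse (q * r * s * p)) = (1 + inverse ?A) * p"
    by (simp add: distrib_left distrib_right)
  have "inverse (1 + ?A) * p * ((1 + inverse (q * r * s * p)) * q)
      = inverse (1 + ?A) * (p * (1 + inverse (q * r * s * p))) * q"
    by (simp only: mult.assoc)
  also have "\<dots> = inverse (1 + ?A) * (1 + inverse ?A) * p * q"
    unfolding conjugated by (simp only: mult.assoc)
  also have "\<dots> = inverse ?A * p * q"
    using inverse_one_plus_mult_one_plus_inverse[OF A_nz assms(5)] by (simp only:)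
  also have "\<dots> = inverse (r * s)"
    using assms(1,2) by (rule inverse_cyclic_product_cancel)
  finally show ?thesis .
qed

lemma cyc4_eq_inverse_of_pair_products:
  fixes a b :: "nat \<Rightarrow> 'a::division_ring"
  assumes pairs: "\<And>i. b (i mod 4) * b ((i + 1) mod 4) = inverse (a (i mod 4) * a ((i + 1) mod 4))"
  shows "cyc4 a i = inverse (cyc4 b (i + 2))"
proof -
  have idx: "(i + 2 + 1) mod 4 = (i + 3) mod 4" "(i + 2 + 2) mod 4 = i mod 4"
      "(i + 2 + 3) mod 4 = (i + 1) mod 4"
    by presburger+
  have "cyc4 b (i + 2) = (b ((i + 2) mod 4) * b ((i + 2 + 1) mod 4)) * (b (i mod 4) * b ((i + 1) mod 4))"
    by (simp only: cyc4_def idx mult.assoc)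
  also have "\<dots> = inverse (a ((i + 2) mod 4) * a ((i + 2 + 1) mod 4)) * inverse (a (i mod 4) * a ((i + 1) mod 4))"
    by (simp only: pairs)
  also have "\<dots> = inverse (cyc4 a i)"
    by (simp only: cyc4_def idx division_ring_inverse_mult_distrib mult.assoc)
  finally show ?thesis by simp
qed

lemma mod4_cases_succ:
  fixes i :: nat
  obtains "i mod 4 = 0" "(i + 1) mod 4 = 1" | "i mod 4 = 1" "(i + 1) mod 4 = 2"
    | "i mod 4 = 2" "(i + 1) mod 4 = 3" | "i mod 4 = 3" "(i + 1) mod 4 = 0"
proof -
  have "i mod 4 = 0 \<and> (i + 1) mod 4 = 1 \<or> i mod 4 = 1 \<and> (i + 1) mod 4 = 2
      \<or> i mod 4 = 2 \<and> (i + 1) mod 4 = 3 \<or> i mod 4 = 3 \<and> (i + 1) mod 4 = 0"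
    by presburger
  with that show ?thesis by metis
qed

lemma cyc4_explicit:
  "cyc4 a 0 = a 0 * a 1 * a 2 * a 3" "cyc4 a 1 = a 1 * a 2 * a 3 * a 0"
  "cyc4 a 2 = a 2 * a 3 * a 0 * a 1" "cyc4 a 3 = a 3 * a 0 * a 1 * a 2"
  "cyc4 a 4 = cyc4 a 0"
  by (simp_all add: cyc4_def) (simp_all add: numeral_2_eq_2)

theorem lemma4p4:
  fixes a b :: "nat \<Rightarrow> 'a::division_ring"
  assumes nz: "\<And>i. i < 4 \<Longrightarrow> a i \<noteq> 0"
    and nA: "\<And>i. 1 + cyc4 a i \<noteq> 0"
    and b1: "b 1 = (1 + inverse (cyc4 a 3)) * a 3"
    and b2: "b 2 = inverse (1 + cyc4 a 4) * a (4 mod 4)"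
    and b3: "b 3 = (1 + inverse (cyc4 a 1)) * a 1"
    and b4: "b (4 mod 4) = inverse (1 + cyc4 a 2) * a 2"
  shows "\<forall>i. b (i mod 4) * b ((i + 1) mod 4) = inverse (a (i mod 4) * a ((i + 1) mod 4))
            \<and> cyc4 a i = inverse (cyc4 b (i + 2))"
proof -
  have a_nz: "a 0 \<noteq> 0" "a 1 \<noteq> 0" "a 2 \<noteq> 0" "a 3 \<noteq> 0"
    using nz by simp_all
  have A_nz: "1 + a 0 * a 1 * a 2 * a 3 \<noteq> 0" "1 + a 1 * a 2 * a 3 * a 0 \<noteq> 0"
      "1 + a 2 * a 3 * a 0 * a 1 \<noteq> 0" "1 + a 3 * a 0 * a 1 * a 2 \<noteq> 0"
    unfolding cyc4_explicit(1-4)[symmetric] by (fact nA)+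
  have b_explicit: "b 0 = inverse (1 + a 2 * a 3 * a 0 * a 1) * a 2"
      "b 1 = (1 + inverse (a 3 * a 0 * a 1 * a 2)) * a 3"
      "b 2 = inverse (1 + a 0 * a 1 * a 2 * a 3) * a 0"
      "b 3 = (1 + inverse (a 1 * a 2 * a 3 * a 0)) * a 1"
    using b1 b2 b3 b4 unfolding cyc4_explicit by simp_all
  have products: "b 0 * b 1 = inverse (a 0 * a 1)" "b 1 * b 2 = inverse (a 1 * a 2)"
      "b 2 * b 3 = inverse (a 2 * a 3)" "b 3 * b 0 = inverse (a 3 * a 0)"
    unfolding b_explicit using a_nz A_nz
    by (simp_all add: inverse_plus_pair_product plus_inverse_pair_product)
  have pairs: "b (i mod 4) * b ((i + 1) mod 4) = inverse (a (i mod 4) * a ((i + 1) mod 4))"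
    for i :: nat
    by (cases i rule: mod4_cases_succ) (simp_all only: products)
  show ?thesis
    using pairs cyc4_eq_inverse_of_pair_products[OF pairs] by simp
qed

end
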